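(* Let $S_{N-2}$ denote the set $\{\pi\in S_N:\pi(1)=2,\ \pi(2)=1\}$, let $\gamma_{ij}\in S_N$ denote the transposition exchanging $i$ and $j$ (with $\gamma_{ii}$ the identity), and for $\pi\in S_{N-2}$ and $a_+,a_-,b_+,b_-\in\{1,\dots,N\}$ define $T_{a_+a_-b_+b_-}(\pi)=\gamma_{2b_+}\gamma_{2a_+}\pi\gamma_{2a_-}\gamma_{2b_-}$ (composition of maps). If $(\pi,a_+,a_-,b_+,b_-)$ is uniform on $S_{N-2}\times\{1,\dots,N\}\times\{2,\dots,N\}^3$, then $T_{a_+a_-b_+b_-}(\pi)$ is uniform on $S_N$. Moreover, \[(T_{a_+a_-b_+b_-}(\pi))(1)=a_+,\qquad(T_{a_+a_-b_+b_-}(\pi))^{-1}(1)=a_-,\] provided that $|\{1,2,a_+,a_-,b_+,b_-\}|=6$. *)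

theory Defs
  imports "HOL-Probability.Probability_Mass_Function" "HOL-Combinatorics.Permutations"
begin

definition SN :: "nat \<Rightarrow> (nat \<Rightarrow> nat) set" where
  "SN N = {p. p permutes {1..N}}"

definition SN2 :: "nat \<Rightarrow> (nat \<Rightarrow> nat) set" where
  "SN2 N = {p \<in> SN N. p 1 = 2 \<and> p 2 = 1}"

definition gam :: "nat \<Rightarrow> nat \<Rightarrow> nat \<Rightarrow> nat" where
  "gam i j = Transposition.transpose i j"

definition T :: "nat \<Rightarrow> nat \<Rightarrow> nat \<Rightarrow> nat \<Rightarrow> (nat \<Rightarrow> nat) \<Rightarrow> (nat \<Rightarrow> nat)" where
  "T ap am bp bm p = gam 2 bp \<circ> gam 2 ap \<circ> p \<circ> gam 2 am \<circ> gam 2 bm"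

end

theory Submission
  imports Defs
begin

text \<open>
  For every pair (b_+, b_-), the map (\<pi>, a_+, a_-) \<mapsto> \<gamma>_{2a_+} \<pi> \<gamma>_{2a_-} is a bijection
  from S_{N-2} \<times> {1..N} \<times> {2..N} onto S_N: its inverse reads a_+ off as \<sigma>(1) and then
  a_- as the preimage of 1 under \<gamma>_{2a_+} \<sigma>. Composing on both sides with the fixed
  transpositions \<gamma>_{2b_+} and \<gamma>_{2b_-} is again a bijection of S_N, so every fibre of the
  uniform law over (b_+, b_-) is pushed forward to the uniform law on S_N.
\<close>

lemma pmf_of_set_Times:
  assumes "finite A" "A \<noteq> {}" "finite B" "B \<noteq> {}"
  shows "pmf_of_set (A \<times> B) = pair_pmf (pmf_of_set A) (pmf_of_set B)"
proof (rule pmf_eqI)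
  fix x :: "'a \<times> 'b"
  obtain a b where x: "x = (a, b)" by fastforce
  show "pmf (pmf_of_set (A \<times> B)) x = pmf (pair_pmf (pmf_of_set A) (pmf_of_set B)) x"
    using assms by (simp add: x pmf_pair card_cartesian_product split: split_indicator)
qed

lemma map_pair_pmf_eq_bind_snd:
  "map_pmf f (pair_pmf M N) = bind_pmf N (\<lambda>b. map_pmf (\<lambda>a. f (a, b)) M)"
  unfolding pair_pmf_def
  by (subst bind_commute_pmf) (simp add: map_pmf_def bind_assoc_pmf bind_return_pmf)

lemma map_pmf_of_set_Times_fibrewise_bij:
  assumes "finite A" "A \<noteq> {}" "finite B" "B \<noteq> {}"
    and "\<And>b. b \<in> B \<Longrightarrow> bij_betw (\<lambda>a. f (a, b)) A C"
  shows "map_pmf f (pmf_of_set (A \<times> B)) = pmf_of_set C"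
proof -
  have "map_pmf f (pmf_of_set (A \<times> B))
      = bind_pmf (pmf_of_set B) (\<lambda>b. map_pmf (\<lambda>a. f (a, b)) (pmf_of_set A))"
    using assms by (simp add: pmf_of_set_Times map_pair_pmf_eq_bind_snd)
  also have "\<dots> = bind_pmf (pmf_of_set B) (\<lambda>_. pmf_of_set C)"
    using assms by (intro bind_pmf_cong refl) (simp add: map_pmf_of_set_bij_betw)
  finally show ?thesis by simp
qed

lemma bij_betw_permutes_sandwich:
  assumes "g permutes S" "h permutes S"
  shows "bij_betw (\<lambda>\<sigma>. g \<circ> \<sigma> \<circ> h) {\<sigma>. \<sigma> permutes S} {\<sigma>. \<sigma> permutes S}"
proof (rule bij_betw_byWitness[where f' = "\<lambda>\<tau>. inv g \<circ> \<tau> \<circ> inv h"])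
  have "inv g \<circ> g = id" "h \<circ> inv h = id" "g \<circ> inv g = id" "inv h \<circ> h = id"
    using assms by (simp_all add: permutes_inv_o)
  then show "\<forall>\<sigma> \<in> {\<sigma>. \<sigma> permutes S}. inv g \<circ> (g \<circ> \<sigma> \<circ> h) \<circ> inv h = \<sigma>"
    and "\<forall>\<tau> \<in> {\<sigma>. \<sigma> permutes S}. g \<circ> (inv g \<circ> \<tau> \<circ> inv h) \<circ> h = \<tau>"
    by (simp_all add: comp_assoc) (simp_all flip: comp_assoc)
  show "(\<lambda>\<sigma>. g \<circ> \<sigma> \<circ> h) ` {\<sigma>. \<sigma> permutes S} \<subseteq> {\<sigma>. \<sigma> permutes S}"
    and "(\<lambda>\<tau>. inv g \<circ> \<tau> \<circ> inv h) ` {\<sigma>. \<sigma> permutes S} \<subseteq> {\<sigma>. \<sigma> permutes S}"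
    using assms by (auto intro!: permutes_compose permutes_inv)
qed

lemma bij_betw_transpose_sandwich:
  assumes "x \<in> S" "y \<in> S" "x \<noteq> y"
  shows "bij_betw (\<lambda>(p, a, b). Transposition.transpose y a \<circ> p \<circ> Transposition.transpose y b)
           ({p. p permutes S \<and> p x = y \<and> p y = x} \<times> S \<times> (S - {x}))
           {\<sigma>. \<sigma> permutes S}"
    (is "bij_betw ?F (?P \<times> S \<times> (S - {x})) ?SN")
proof -
  define G where "G \<sigma> = (let a = \<sigma> x; q = Transposition.transpose y a \<circ> \<sigma>; b = inv q x
                         in (q \<circ> Transposition.transpose y b, a, b))" for \<sigma> :: "'a \<Rightarrow> 'a"
  have G_right_inverse: "G \<sigma> \<in> ?P \<times> S \<times> (S - {x}) \<and> ?F (G \<sigma>) = \<sigma>" if \<sigma>: "\<sigma> permutes S" for \<sigma>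
  proof -
    define a where "a = \<sigma> x"
    define q where "q = Transposition.transpose y a \<circ> \<sigma>"
    define b where "b = inv q x"
    have a: "a \<in> S" using \<sigma> assms by (simp add: a_def permutes_in_image)
    have q: "q permutes S" using \<sigma> a assms by (simp add: q_def permutes_compose permutes_swap_id)
    have "q x = y" by (simp add: q_def a_def)
    have "q b = x" using q by (simp add: b_def permutes_inverses)
    have b: "b \<in> S" "b \<noteq> x"
      using permutes_in_image[OF permutes_inv[OF q]] assms \<open>q x = y\<close> \<open>q b = x\<close>
      by (auto simp: b_def)
    have "q \<circ> Transposition.transpose y b \<in> ?P"
      using q b assms \<open>q x = y\<close> \<open>q b = x\<close> by (auto simp: permutes_compose permutes_swap_id)
    moreover have "Transposition.transpose y a \<circ> (q \<circ> Transposition.transpose y b)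
                     \<circ> Transposition.transpose y b = \<sigma>"
      by (simp add: q_def fun_eq_iff)
    ultimately show ?thesis
      using a b by (simp add: G_def Let_def flip: a_def q_def b_def)
  qed
  show ?thesis
  proof (rule bij_betwI[where g = G])
    show "?F \<in> ?P \<times> S \<times> (S - {x}) \<rightarrow> ?SN"
      using assms by (auto intro!: permutes_compose permutes_swap_id)
    show "G \<in> ?SN \<rightarrow> ?P \<times> S \<times> (S - {x})" and "\<And>\<sigma>. \<sigma> \<in> ?SN \<Longrightarrow> ?F (G \<sigma>) = \<sigma>"
      using G_right_inverse by auto
  next
    fix z assume "z \<in> ?P \<times> S \<times> (S - {x})"
    then obtain p a b where z: "z = (p, a, b)" and p: "p permutes S" "p x = y" "p y = x"
      and "b \<in> S" "b \<noteq> x" by auto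
    let ?q = "p \<circ> Transposition.transpose y b"
    have Fx: "?F z x = a"
      using p \<open>b \<noteq> x\<close> \<open>x \<noteq> y\<close> by (simp add: z)
    moreover have "Transposition.transpose y (?F z x) \<circ> ?F z = ?q"
      unfolding Fx by (simp add: z fun_eq_iff)
    moreover have "inv ?q x = b"
      using p by (intro inv_f_eq bij_is_inj bij_comp permutes_bij bij_transpose) simp_all
    moreover have "?q \<circ> Transposition.transpose y b = p" by (simp add: fun_eq_iff)
    ultimately show "G (?F z) = z"
      by (simp add: G_def Let_def z)
  qed
qed

lemma T_apply_one_and_inv_apply_one:
  assumes "bij p" "p 1 = 2" "p 2 = 1" "distinct [1, 2, ap, am, bp, bm]"
  shows "T ap am bp bm p 1 = ap \<and> inv (T ap am bp bm p) 1 = am"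
proof
  show "T ap am bp bm p 1 = ap" using assms by (simp add: T_def gam_def)
  have "bij (T ap am bp bm p)" using assms by (simp add: T_def gam_def bij_comp)
  moreover have "T ap am bp bm p am = 1" using assms by (simp add: T_def gam_def)
  ultimately show "inv (T ap am bp bm p) 1 = am" by (simp add: inv_f_eq bij_is_inj)
qed

lemma SN_eq: "SN N = {\<sigma>. \<sigma> permutes {1..N}}"
  by (simp add: SN_def)

lemma SN2_eq: "SN2 N = {p. p permutes {1..N} \<and> p 1 = 2 \<and> p 2 = 1}"
  by (auto simp: SN2_def SN_def)

lemma finite_SN2: "finite (SN2 N)"
  unfolding SN2_eq by (rule finite_subset[OF _ finite_permutations[of "{1..N}"]]) auto

lemma transpose_in_SN2: "N \<ge> 2 \<Longrightarrow> Transposition.transpose 1 2 \<in> SN2 N"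
  by (simp add: SN2_eq permutes_swap_id)

lemma bij_betw_T:
  assumes "N \<ge> 2" "bp \<in> {1..N}" "bm \<in> {1..N}"
  shows "bij_betw (\<lambda>(p, ap, am). T ap am bp bm p) (SN2 N \<times> {1..N} \<times> {2..N}) (SN N)"
proof -
  have "{2..N} = {1..N} - {1}" by auto
  then have "bij_betw (\<lambda>(p, ap, am). gam 2 ap \<circ> p \<circ> gam 2 am) (SN2 N \<times> {1..N} \<times> {2..N}) (SN N)"
    using bij_betw_transpose_sandwich[of 1 "{1..N}" 2] assms
    by (simp add: SN_eq SN2_eq gam_def)
  moreover have "bij_betw (\<lambda>\<sigma>. gam 2 bp \<circ> \<sigma> \<circ> gam 2 bm) (SN N) (SN N)"
    unfolding SN_eq gam_def using assms
    by (intro bij_betw_permutes_sandwich permutes_swap_id) auto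
  ultimately have "bij_betw ((\<lambda>\<sigma>. gam 2 bp \<circ> \<sigma> \<circ> gam 2 bm) \<circ> (\<lambda>(p, ap, am). gam 2 ap \<circ> p \<circ> gam 2 am))
                     (SN2 N \<times> {1..N} \<times> {2..N}) (SN N)"
    by (rule bij_betw_trans)
  then show ?thesis
    by (rule bij_betw_cong[THEN iffD1, rotated]) (auto simp: T_def comp_assoc)
qed

lemma map_pmf_T_uniform:
  assumes "N \<ge> 2"
  shows "map_pmf (\<lambda>(p, ap, am, bp, bm). T ap am bp bm p)
           (pmf_of_set (SN2 N \<times> {1..N} \<times> {2..N} \<times> {2..N} \<times> {2..N}))
         = pmf_of_set (SN N)"
proof -
  define X where "X = SN2 N \<times> {1..N} \<times> {2..N::nat}"
  define Y where "Y = {2..N} \<times> {2..N::nat}"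
  define reassoc :: "((nat \<Rightarrow> nat) \<times> nat \<times> nat) \<times> nat \<times> nat \<Rightarrow> _"
    where "reassoc = (\<lambda>((p, ap, am), bp, bm). (p, ap, am, bp, bm))"
  have X: "finite X" "X \<noteq> {}" and Y: "finite Y" "Y \<noteq> {}"
    using assms finite_SN2 transpose_in_SN2 by (auto simp: X_def Y_def)
  have "inj_on reassoc (X \<times> Y)" by (auto simp: reassoc_def inj_on_def)
  moreover have "reassoc ` (X \<times> Y) = SN2 N \<times> {1..N} \<times> {2..N} \<times> {2..N} \<times> {2..N}"
    by (force simp: reassoc_def X_def Y_def)
  ultimately have "pmf_of_set (SN2 N \<times> {1..N} \<times> {2..N} \<times> {2..N} \<times> {2..N})
                    = map_pmf reassoc (pmf_of_set (X \<times> Y))"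
    using X Y by (simp add: map_pmf_of_set_inj)
  also have "map_pmf (\<lambda>(p, ap, am, bp, bm). T ap am bp bm p) \<dots> = pmf_of_set (SN N)"
    unfolding pmf.map_comp
  proof (rule map_pmf_of_set_Times_fibrewise_bij[OF X Y])
    fix b assume "b \<in> Y"
    moreover have "(\<lambda>x. ((\<lambda>(p, ap, am, bp, bm). T ap am bp bm p) \<circ> reassoc) (x, b))
                     = (\<lambda>(p, ap, am). T ap am (fst b) (snd b) p)"
      by (auto simp: reassoc_def fun_eq_iff split: prod.splits)
    ultimately show "bij_betw (\<lambda>x. ((\<lambda>(p, ap, am, bp, bm). T ap am bp bm p) \<circ> reassoc) (x, b)) X (SN N)"
      using bij_betw_T[OF assms] by (auto simp: X_def Y_def)
  qed
  finally show ?thesis .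
qed

lemma T_marked_points:
  assumes "p \<in> SN2 N" "card {1, 2, ap, am, bp, bm} = 6"
  shows "T ap am bp bm p 1 = ap \<and> inv (T ap am bp bm p) 1 = am"
proof -
  have "distinct [1, 2, ap, am, bp, bm]"
    by (rule card_distinct) (use assms(2) in \<open>simp only: list.set length_Cons list.size\<close>)
  with assms(1) show ?thesis
    by (intro T_apply_one_and_inv_apply_one) (auto simp: SN2_eq permutes_bij)
qed

theorem lemma7p1:
  fixes N :: nat
  assumes "N \<ge> 2"
  shows "map_pmf (\<lambda>(p, ap, am, bp, bm). T ap am bp bm p)
           (pmf_of_set (SN2 N \<times> {1..N} \<times> {2..N} \<times> {2..N} \<times> {2..N}))
         = pmf_of_set (SN N) \<and>
         (\<forall>p ap am bp bm. p \<in> SN2 N \<longrightarrow> ap \<in> {1..N} \<longrightarrow> am \<in> {2..N} \<longrightarrow>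
           bp \<in> {2..N} \<longrightarrow> bm \<in> {2..N} \<longrightarrow> card {1, 2, ap, am, bp, bm} = 6 \<longrightarrow>
           T ap am bp bm p 1 = ap \<and> inv (T ap am bp bm p) 1 = am)"
  using map_pmf_T_uniform[OF assms] T_marked_points by blast

end
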